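(* For every integer $d\ge 2$ and every weighted graph $G=(V,E,w)$ with positive weights and $E\ne\emptyset$, $$\mathrm{MixedProd}_d(G)=\max_{f:V\to S^{d^2-2}}\frac12\left(\frac{d-1}{d}\right)\frac1W\sum_{(u,v)\in E}w_{uv}\left(1-\frac{\langle f(u),f(v)\rangle}{(d-1)^2}\right),$$ and consequently $\mathrm{MixedProd}_d(G)\le\frac{(d-1)^2+1}{2d(d-1)}=\frac12-\frac{d-2}{2d(d-1)}$.
   Context: $S^{d^2-2}$ is the unit sphere in $\mathbb R^{d^2-1}$. Let $h$ be the orthogonal projector onto the antisymmetric subspace of $\mathbb C^d\otimes\mathbb C^d$. For $G=(V,E,w)$, $W=\sum_e w_e$ and $H_G=\frac1W\sum_{(u,v)\in E}w_{uv}h_{uv}$ on $(\mathbb C^d)^{\otimes V}$, $h_{uv}$ acting as $h$ on qudits $u,v$ and identity elsewhere. $\mathrm{MixedProd}_d(G)=\max\operatorname{tr}\big(H_G\bigotimes_{v\in V}\rho_v\big)$ over $d\times d$ density matrices $\rho_v$ with $\operatorname{tr}(\rho_v^2)=\frac1{d-1}$ for all $v$. *)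

theory Defs
  imports "HOL-Analysis.Analysis" "HOL-Library.FuncSet"
begin

text \<open>A d x d complex matrix is represented as a function nat => nat => complex,
  only entries with indices < d being relevant.\<close>

definition density_matrix :: "nat \<Rightarrow> (nat \<Rightarrow> nat \<Rightarrow> complex) \<Rightarrow> bool" where
  "density_matrix d \<rho> \<longleftrightarrow>
     (\<forall>i<d. \<forall>j<d. \<rho> i j = cnj (\<rho> j i)) \<and>
     (\<forall>x :: nat \<Rightarrow> complex. 0 \<le> Re (\<Sum>i<d. \<Sum>j<d. cnj (x i) * \<rho> i j * x j)) \<and>
     (\<Sum>i<d. \<rho> i i) = 1"

definition purity :: "nat \<Rightarrow> (nat \<Rightarrow> nat \<Rightarrow> complex) \<Rightarrow> complex" where
  "purity d \<rho> = (\<Sum>i<d. \<Sum>j<d. \<rho> i j * \<rho> j i)"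

text \<open>The orthogonal projector onto the antisymmetric subspace of C^d (x) C^d,
  h = (I - SWAP)/2, entry <a b| h |c e>.\<close>
definition hproj :: "nat \<Rightarrow> nat \<Rightarrow> nat \<Rightarrow> nat \<Rightarrow> complex" where
  "hproj a b c e = ((if a = c \<and> b = e then 1 else 0) - (if a = e \<and> b = c then 1 else 0)) / 2"

text \<open>Computational basis of (C^d)^{(x)V}: tuples x : V -> {0..<d}.
  Operators on it are kernels (matrix entries) indexed by such tuples.\<close>
definition basis_idx :: "nat \<Rightarrow> 'a set \<Rightarrow> ('a \<Rightarrow> nat) set" where
  "basis_idx d V = PiE V (\<lambda>_. {..<d})"

definition h_on :: "'a set \<Rightarrow> 'a \<Rightarrow> 'a \<Rightarrow> ('a \<Rightarrow> nat) \<Rightarrow> ('a \<Rightarrow> nat) \<Rightarrow> complex" where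
  "h_on V u v x y = hproj (x u) (x v) (y u) (y v) *
     (if \<forall>t\<in>V - {u, v}. x t = y t then 1 else 0)"

definition total_weight :: "('a \<times> 'a) set \<Rightarrow> ('a \<times> 'a \<Rightarrow> real) \<Rightarrow> real" where
  "total_weight E w = (\<Sum>e\<in>E. w e)"

definition H_G :: "'a set \<Rightarrow> ('a \<times> 'a) set \<Rightarrow> ('a \<times> 'a \<Rightarrow> real) \<Rightarrow>
    ('a \<Rightarrow> nat) \<Rightarrow> ('a \<Rightarrow> nat) \<Rightarrow> complex" where
  "H_G V E w x y = (1 / complex_of_real (total_weight E w)) *
     (\<Sum>(u, v)\<in>E. complex_of_real (w (u, v)) * h_on V u v x y)"

definition prod_state :: "'a set \<Rightarrow> ('a \<Rightarrow> nat \<Rightarrow> nat \<Rightarrow> complex) \<Rightarrow>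
    ('a \<Rightarrow> nat) \<Rightarrow> ('a \<Rightarrow> nat) \<Rightarrow> complex" where
  "prod_state V \<rho> x y = (\<Prod>v\<in>V. \<rho> v (x v) (y v))"

definition tr_prod :: "nat \<Rightarrow> 'a set \<Rightarrow> (('a \<Rightarrow> nat) \<Rightarrow> ('a \<Rightarrow> nat) \<Rightarrow> complex) \<Rightarrow>
    (('a \<Rightarrow> nat) \<Rightarrow> ('a \<Rightarrow> nat) \<Rightarrow> complex) \<Rightarrow> complex" where
  "tr_prod d V A B = (\<Sum>x\<in>basis_idx d V. \<Sum>y\<in>basis_idx d V. A x y * B y x)"

text \<open>MixedProd_d(G): the maximum (supremum; it is attained by compactness) of
  tr(H_G (x)_v rho_v) over density matrices with tr(rho_v^2) = 1/(d-1).
  The trace is real since both operators are Hermitian; we take its real part.\<close>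
definition MixedProd :: "nat \<Rightarrow> 'a set \<Rightarrow> ('a \<times> 'a) set \<Rightarrow> ('a \<times> 'a \<Rightarrow> real) \<Rightarrow> real" where
  "MixedProd d V E w = Sup {Re (tr_prod d V (H_G V E w) (prod_state V \<rho>)) | \<rho>.
      \<forall>v\<in>V. density_matrix d (\<rho> v) \<and> purity d (\<rho> v) = 1 / (of_nat d - 1)}"

definition on_sphere :: "nat \<Rightarrow> (nat \<Rightarrow> real) \<Rightarrow> bool" where
  "on_sphere d p \<longleftrightarrow> (\<Sum>i<d^2 - 1. (p i)^2) = 1"

definition inner_d :: "nat \<Rightarrow> (nat \<Rightarrow> real) \<Rightarrow> (nat \<Rightarrow> real) \<Rightarrow> real" where
  "inner_d d p q = (\<Sum>i<d^2 - 1. p i * q i)"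

definition sphere_value :: "nat \<Rightarrow> ('a \<times> 'a) set \<Rightarrow> ('a \<times> 'a \<Rightarrow> real) \<Rightarrow> ('a \<Rightarrow> nat \<Rightarrow> real) \<Rightarrow> real" where
  "sphere_value d E w f = (1/2) * ((real d - 1) / real d) * (1 / total_weight E w) *
     (\<Sum>(u, v)\<in>E. w (u, v) * (1 - inner_d d (f u) (f v) / (real d - 1)^2))"

end

theory Submission
  imports Defs
begin

text \<open>For trace-one factors a single projector term contributes \<open>tr (h (\<rho> \<otimes> \<sigma>)) = (1 - tr (\<rho> \<sigma>)) / 2\<close>,
  so the energy of a product state is a weighted sum of the overlaps \<open>tr (\<rho>\<^sub>u \<rho>\<^sub>v)\<close>.
  Write \<open>\<rho> = I / d + B\<close> with \<open>B\<close> traceless Hermitian. Explicit real coordinates identify these \<open>B\<close>,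
  with the Hilbert-Schmidt inner product, isometrically with \<open>\<real>^(d\<^sup>2 - 1)\<close>; after scaling by
  \<open>sqrt (d (d - 1))\<close> the Hermitian trace-one matrices of purity \<open>1 / (d - 1)\<close> become exactly the unit
  sphere, and \<open>tr (\<rho> \<sigma>) = 1 / d + \<langle>f, g\<rangle> / (d (d - 1))\<close>, which turns the energy into the sphere
  objective. Positivity is automatic at this purity: \<open>x\<^sup>* \<rho> x = |x|\<^sup>2 / d + \<langle>B, x x\<^sup>* - |x|\<^sup>2 I / d\<rangle>\<close>,
  and Cauchy-Schwarz bounds the last term by \<open>|x|\<^sup>2 / d\<close>. The upper bound follows from
  \<open>\<langle>f, g\<rangle> \<ge> -1\<close> on the sphere.\<close>

definition mat_trace :: "nat \<Rightarrow> (nat \<Rightarrow> nat \<Rightarrow> complex) \<Rightarrow> complex" where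
  "mat_trace d A = (\<Sum>i<d. A i i)"

definition mat_tr_prod :: "nat \<Rightarrow> (nat \<Rightarrow> nat \<Rightarrow> complex) \<Rightarrow> (nat \<Rightarrow> nat \<Rightarrow> complex) \<Rightarrow> complex" where
  "mat_tr_prod d A B = (\<Sum>i<d. \<Sum>j<d. A i j * B j i)"

definition hermitian_mat :: "nat \<Rightarrow> (nat \<Rightarrow> nat \<Rightarrow> complex) \<Rightarrow> bool" where
  "hermitian_mat d A \<longleftrightarrow> (\<forall>i<d. \<forall>j<d. A i j = cnj (A j i))"

lemma hermitian_matD: "hermitian_mat d A \<Longrightarrow> i < d \<Longrightarrow> j < d \<Longrightarrow> A i j = cnj (A j i)"
  unfolding hermitian_mat_def by blast

lemma hermitian_mat_diag_real: "hermitian_mat d A \<Longrightarrow> i < d \<Longrightarrow> Im (A i i) = 0"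
  unfolding hermitian_mat_def by (metis cnj.simps(2) neg_equal_zero)

section \<open>The energy of a product state\<close>

lemma sum_PiE_insert2:
  fixes F :: "('a \<Rightarrow> 'b) \<Rightarrow> 'c::comm_monoid_add"
  assumes "u \<notin> V" "v \<notin> V" "u \<noteq> v"
  shows "(\<Sum>x\<in>PiE (insert u (insert v V)) A. F x) =
    (\<Sum>a\<in>A u. \<Sum>b\<in>A v. \<Sum>g\<in>PiE V A. F (g(u := a, v := b)))"
proof -
  have "(\<Sum>x\<in>PiE (insert u (insert v V)) A. F x) =
      (\<Sum>(a, b, g)\<in>A u \<times> A v \<times> PiE V A. F (g(u := a, v := b)))"
    using assms
    by (intro sum.reindex_bij_witness[of _ "\<lambda>(a, b, g). g(u := a, v := b)"
          "\<lambda>g. (g u, g v, g(u := undefined, v := undefined))"])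
       (auto simp: PiE_def extensional_def fun_upd_def intro!: arg_cong[where f=F])
  then show ?thesis
    by (simp add: sum.cartesian_product)
qed

lemma h_on_prod_state_upd:
  assumes "finite V" "u \<in> V" "v \<in> V" "u \<noteq> v" "g \<in> PiE (V - {u, v}) A" "g' \<in> PiE (V - {u, v}) A"
  shows "h_on V u v (g(u := a, v := b)) (g'(u := c, v := e)) *
      prod_state V \<rho> (g'(u := c, v := e)) (g(u := a, v := b)) =
    hproj a b c e * \<rho> u c a * \<rho> v e b * (if g = g' then \<Prod>t\<in>V - {u, v}. \<rho> t (g t) (g t) else 0)"
proof -
  have V: "V = insert u (insert v (V - {u, v}))"
    using assms(2,3) by auto
  have "(\<forall>t\<in>V - {u, v}. (g(u := a, v := b)) t = (g'(u := c, v := e)) t) \<longleftrightarrow> g = g'"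
    using assms(5,6) by (auto intro: PiE_ext)
  moreover have "prod_state V \<rho> (g'(u := c, v := e)) (g(u := a, v := b)) =
      \<rho> u c a * \<rho> v e b * (\<Prod>t\<in>V - {u, v}. \<rho> t (g' t) (g t))"
  proof -
    have "(\<Prod>t\<in>V - {u, v}. \<rho> t ((g'(u := c, v := e)) t) ((g(u := a, v := b)) t)) =
        (\<Prod>t\<in>V - {u, v}. \<rho> t (g' t) (g t))"
      by (intro prod.cong) auto
    then show ?thesis
      unfolding prod_state_def using assms(1,4) by (subst V) (simp add: mult_ac)
  qed
  ultimately show ?thesis
    using assms(4) unfolding h_on_def by (simp add: mult_ac)
qed

lemma hproj_mult:
  "hproj a b c e * X * Y = (if c = a then if e = b then X * Y / 2 else 0 else 0)
     - (if c = b then if e = a then X * Y / 2 else 0 else 0)"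
  by (auto simp: hproj_def)

lemma sum_hproj_kernel:
  "(\<Sum>a<d. \<Sum>b<d. \<Sum>c<d. \<Sum>e<d. hproj a b c e * A c a * B e b) =
    (mat_trace d A * mat_trace d B - mat_tr_prod d A B) / 2"
proof -
  have pull_if: "(\<Sum>e\<in>S. if P then f e else 0) = (if P then sum f S else 0)"
    for P and f :: "nat \<Rightarrow> complex" and S
    by simp
  have "(\<Sum>a<d. \<Sum>b<d. \<Sum>c<d. \<Sum>e<d. hproj a b c e * A c a * B e b) =
      (\<Sum>a<d. \<Sum>b<d. A a a * B b b / 2 - A b a * B a b / 2)"
    by (intro sum.cong refl) (simp add: hproj_mult sum_subtractf sum.delta pull_if)
  also have "\<dots> = (mat_trace d A * mat_trace d B - mat_tr_prod d A B) / 2"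
  proof -
    have "(\<Sum>a<d. \<Sum>b<d. A b a * B a b) = mat_tr_prod d A B"
      unfolding mat_tr_prod_def by (rule sum.swap)
    then show ?thesis
      unfolding mat_trace_def
      by (simp add: sum_subtractf sum_divide_distrib[symmetric] diff_divide_distrib sum_product)
  qed
  finally show ?thesis .
qed

lemma tr_h_on_prod_state:
  assumes "finite V" "u \<in> V" "v \<in> V" "u \<noteq> v"
  shows "(\<Sum>x\<in>basis_idx d V. \<Sum>y\<in>basis_idx d V. h_on V u v x y * prod_state V \<rho> y x) =
    (mat_trace d (\<rho> u) * mat_trace d (\<rho> v) - mat_tr_prod d (\<rho> u) (\<rho> v)) / 2 *
    (\<Prod>t\<in>V - {u, v}. mat_trace d (\<rho> t))"
proof -
  define P where "P = PiE (V - {u, v}) (\<lambda>_. {..<d::nat})"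
  define K where "K a b c e = hproj a b c e * \<rho> u c a * \<rho> v e b" for a b c e
  define Q where "Q g = (\<Prod>t\<in>V - {u, v}. \<rho> t (g t) (g t))" for g
  have finP: "finite P"
    unfolding P_def using assms(1) by (simp add: finite_PiE)
  have split: "(\<Sum>x\<in>basis_idx d V. F x) = (\<Sum>a<d. \<Sum>b<d. \<Sum>g\<in>P. F (g(u := a, v := b)))"
    for F :: "('a \<Rightarrow> nat) \<Rightarrow> complex"
  proof -
    have "V = insert u (insert v (V - {u, v}))"
      using assms(2,3) by auto
    then show ?thesis
      unfolding basis_idx_def P_def using assms(4) by (metis sum_PiE_insert2 Diff_iff insertCI)
  qed
  have "(\<Sum>x\<in>basis_idx d V. \<Sum>y\<in>basis_idx d V. h_on V u v x y * prod_state V \<rho> y x) =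
      (\<Sum>a<d. \<Sum>b<d. \<Sum>g\<in>P. \<Sum>c<d. \<Sum>e<d. \<Sum>g'\<in>P. if g = g' then K a b c e * Q g else 0)"
    unfolding split using assms
    by (intro sum.cong refl) (simp add: h_on_prod_state_upd P_def K_def Q_def)
  also have "\<dots> = (\<Sum>a<d. \<Sum>b<d. \<Sum>g\<in>P. \<Sum>c<d. \<Sum>e<d. K a b c e * Q g)"
    using finP by (simp add: sum.delta')
  also have "\<dots> = (\<Sum>a<d. \<Sum>b<d. \<Sum>c<d. \<Sum>e<d. K a b c e) * (\<Sum>g\<in>P. Q g)"
    by (simp add: sum_distrib_left sum_distrib_right sum.swap[of _ P])
  also have "(\<Sum>g\<in>P. Q g) = (\<Prod>t\<in>V - {u, v}. mat_trace d (\<rho> t))"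
    unfolding Q_def P_def mat_trace_def using assms(1) by (simp add: prod_sum_PiE)
  finally show ?thesis
    unfolding K_def sum_hproj_kernel .
qed

lemma Re_tr_H_G_prod_state:
  assumes "finite V" "E \<subseteq> V \<times> V" "\<forall>(u, v)\<in>E. u \<noteq> v" "\<forall>t\<in>V. mat_trace d (\<rho> t) = 1"
  shows "Re (tr_prod d V (H_G V E w) (prod_state V \<rho>)) =
    (\<Sum>(u, v)\<in>E. w (u, v) * ((1 - Re (mat_tr_prod d (\<rho> u) (\<rho> v))) / 2)) / total_weight E w"
proof -
  have "tr_prod d V (H_G V E w) (prod_state V \<rho>) =
      (\<Sum>e\<in>E. complex_of_real (w e) * (\<Sum>x\<in>basis_idx d V. \<Sum>y\<in>basis_idx d V.
         h_on V (fst e) (snd e) x y * prod_state V \<rho> y x)) / complex_of_real (total_weight E w)"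
    unfolding tr_prod_def H_G_def case_prod_unfold
    by (simp add: sum_distrib_left sum_distrib_right sum_divide_distrib mult_ac
        sum.swap[of _ E] sum.swap[of _ E "basis_idx d V"])
  also have "\<dots> = (\<Sum>e\<in>E. complex_of_real (w e) *
      ((1 - mat_tr_prod d (\<rho> (fst e)) (\<rho> (snd e))) / 2)) / complex_of_real (total_weight E w)"
  proof (intro arg_cong[where f="\<lambda>z. z / complex_of_real (total_weight E w)"] sum.cong refl)
    fix e assume "e \<in> E"
    then have "fst e \<in> V" "snd e \<in> V" "fst e \<noteq> snd e"
      using assms(2,3) by auto
    then show "complex_of_real (w e) * (\<Sum>x\<in>basis_idx d V. \<Sum>y\<in>basis_idx d V.
         h_on V (fst e) (snd e) x y * prod_state V \<rho> y x) =
      complex_of_real (w e) * ((1 - mat_tr_prod d (\<rho> (fst e)) (\<rho> (snd e))) / 2)"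
      using assms(1,4) by (simp add: tr_h_on_prod_state)
  qed
  finally show ?thesis
    by (simp add: Re_sum Re_divide_of_real case_prod_unfold)
qed

section \<open>Bloch coordinates of traceless Hermitian matrices\<close>

text \<open>A trace-zero diagonal is determined by its first \<open>d - 1\<close> entries. Shifting each of them by
  \<open>c\<close> times their sum, where \<open>c\<close> is the positive root of \<open>2 c + (d - 1) c\<^sup>2 = 1\<close>, makes this
  parametrisation isometric (\<open>sum_bloch_diag\<close>).\<close>
definition bloch_diag_coeff :: "nat \<Rightarrow> real" where
  "bloch_diag_coeff d = (sqrt (real d) - 1) / (real d - 1)"

lemma bloch_diag_coeff_mult: "d \<ge> 2 \<Longrightarrow> (real d - 1) * bloch_diag_coeff d = sqrt (real d) - 1"
  unfolding bloch_diag_coeff_def by simp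

lemma bloch_diag_coeff_eq:
  assumes "d \<ge> 2"
  shows "2 * bloch_diag_coeff d + (real d - 1) * (bloch_diag_coeff d)^2 = 1"
proof -
  define \<kappa> where "\<kappa> = bloch_diag_coeff d"
  have "(2 * \<kappa> + (real d - 1) * \<kappa>^2) * (real d - 1) =
      2 * ((real d - 1) * \<kappa>) + ((real d - 1) * \<kappa>)^2"
    by (simp add: power2_eq_square algebra_simps)
  also have "\<dots> = 2 * (sqrt (real d) - 1) + (sqrt (real d) - 1)^2"
    unfolding \<kappa>_def bloch_diag_coeff_mult[OF assms] ..
  also have "\<dots> = real d - 1"
    by (simp add: power2_eq_square algebra_simps)
  finally show ?thesis
    using assms unfolding \<kappa>_def by simp
qed

lemma sum_bloch_diag:
  fixes b c :: "nat \<Rightarrow> real"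
  assumes "d \<ge> 2" "(\<Sum>i<d. b i) = 0" "(\<Sum>i<d. c i) = 0"
  shows "(\<Sum>i<d - 1. (b i + bloch_diag_coeff d * (\<Sum>l<d - 1. b l)) *
      (c i + bloch_diag_coeff d * (\<Sum>l<d - 1. c l))) = (\<Sum>i<d. b i * c i)"
proof -
  define m where "m = d - 1"
  define \<kappa> where "\<kappa> = bloch_diag_coeff d"
  have dm: "d = Suc m"
    using assms(1) unfolding m_def by simp
  have bm: "b m = - (\<Sum>l<m. b l)" and cm: "c m = - (\<Sum>l<m. c l)"
    using assms(2,3) unfolding dm by (simp_all add: add_eq_0_iff)
  have expand: "(\<Sum>i<m. (b i + x) * (c i + y)) =
      (\<Sum>i<m. b i * c i) + y * (\<Sum>i<m. b i) + x * (\<Sum>i<m. c i) + real m * x * y" for x y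
    by (simp add: algebra_simps sum.distrib sum_distrib_left)
  have "(\<Sum>i<m. (b i + \<kappa> * (\<Sum>l<m. b l)) * (c i + \<kappa> * (\<Sum>l<m. c l))) =
      (\<Sum>i<m. b i * c i) + (2 * \<kappa> + real m * \<kappa>^2) * (\<Sum>l<m. b l) * (\<Sum>l<m. c l)"
    unfolding expand by (simp add: algebra_simps power2_eq_square)
  also have "2 * \<kappa> + real m * \<kappa>^2 = 1"
    using bloch_diag_coeff_eq[OF assms(1)] assms(1) unfolding \<kappa>_def m_def by (simp add: of_nat_diff)
  finally show ?thesis
    unfolding \<kappa>_def[symmetric] m_def[symmetric] by (simp add: dm bm cm)
qed

lemma sum_div_mod_eq_sum_sum:
  fixes \<phi> :: "nat \<Rightarrow> nat \<Rightarrow> 'a::comm_monoid_add"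
  assumes "d > 0"
  shows "(\<Sum>k<d * d. \<phi> (k div d) (k mod d)) = (\<Sum>i<d. \<Sum>j<d. \<phi> i j)"
proof -
  have "i * d + j < d * d" if "i < d" "j < d" for i j
  proof -
    have "i * d + j < (i + 1) * d"
      using that by simp
    also have "\<dots> \<le> d * d"
      using that by (intro mult_right_mono) auto
    finally show ?thesis .
  qed
  then have "(\<Sum>k<d * d. \<phi> (k div d) (k mod d)) = (\<Sum>(i, j)\<in>{..<d} \<times> {..<d}. \<phi> i j)"
    using assms
    by (intro sum.reindex_bij_witness[of _ "\<lambda>(i, j). i * d + j" "\<lambda>k. (k div d, k mod d)"])
       (auto simp: less_mult_imp_div_less)
  then show ?thesis
    by (simp add: sum.cartesian_product)
qed

text \<open>The coordinates \<open>k < d\<^sup>2 - 1\<close> enumerate the entries \<open>(k div d, k mod d)\<close> of a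
  \<open>d \<times> d\<close> matrix except the last diagonal one, which a traceless matrix does not need.\<close>
lemma sum_bloch_index:
  fixes \<phi> :: "nat \<Rightarrow> nat \<Rightarrow> 'a::ab_group_add"
  assumes "d > 0"
  shows "(\<Sum>k<d^2 - 1. \<phi> (k div d) (k mod d)) = (\<Sum>i<d. \<Sum>j<d. \<phi> i j) - \<phi> (d - 1) (d - 1)"
proof -
  obtain m where dm: "d = Suc m"
    using assms by (cases d) auto
  have last: "d^2 - 1 = m + m * d"
    unfolding dm by (simp add: power2_eq_square)
  have "m < d" "d - 1 = m"
    using dm by simp_all
  have "d * d = Suc (d^2 - 1)"
    using assms by (simp add: power2_eq_square)
  moreover have "(d^2 - 1) div d = d - 1" "(d^2 - 1) mod d = d - 1"
    unfolding last \<open>d - 1 = m\<close> using \<open>m < d\<close>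
    by (simp_all only: div_mult_self1 mod_mult_self1 div_less mod_less assms neq0_conv)
  ultimately show ?thesis
    using sum_div_mod_eq_sum_sum[OF assms, of \<phi>] by (simp add: eq_diff_eq)
qed

lemma sum_sum_split_diag:
  fixes \<phi> :: "nat \<Rightarrow> nat \<Rightarrow> 'a::comm_monoid_add"
  shows "(\<Sum>i<d. \<Sum>j<d. \<phi> i j) =
    (\<Sum>i<d. \<Sum>j<d. if i < j then \<phi> i j + \<phi> j i else 0) + (\<Sum>i<d. \<phi> i i)"
proof -
  have "(\<Sum>i<d. \<Sum>j<d. \<phi> i j) = (\<Sum>i<d. \<Sum>j<d. (if i < j then \<phi> i j else 0) +
      (if j < i then \<phi> i j else 0) + (if i = j then \<phi> i j else 0))"
    by (intro sum.cong refl) auto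
  also have "\<dots> = (\<Sum>i<d. \<Sum>j<d. if i < j then \<phi> i j else 0) +
      (\<Sum>i<d. \<Sum>j<d. if j < i then \<phi> i j else 0) + (\<Sum>i<d. \<Sum>j<d. if i = j then \<phi> i j else 0)"
    by (simp only: sum.distrib)
  also have "(\<Sum>i<d. \<Sum>j<d. if j < i then \<phi> i j else 0) = (\<Sum>j<d. \<Sum>i<d. if j < i then \<phi> i j else 0)"
    by (rule sum.swap)
  also have "(\<Sum>i<d. \<Sum>j<d. if i = j then \<phi> i j else 0) = (\<Sum>i<d. \<phi> i i)"
    by (simp add: sum.delta)
  also have "(\<Sum>i<d. \<Sum>j<d. if i < j then \<phi> i j else 0) + (\<Sum>j<d. \<Sum>i<d. if j < i then \<phi> i j else 0)
      = (\<Sum>i<d. \<Sum>j<d. if i < j then \<phi> i j + \<phi> j i else 0)"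
    by (simp only: sum.distrib[symmetric]) (intro sum.cong refl; simp)
  finally show ?thesis .
qed

definition bloch_coord :: "nat \<Rightarrow> (nat \<Rightarrow> nat \<Rightarrow> complex) \<Rightarrow> nat \<Rightarrow> nat \<Rightarrow> real" where
  "bloch_coord d B i j =
    (if i < j then sqrt 2 * Re (B i j)
     else if j < i then sqrt 2 * Im (B j i)
     else Re (B i i) + bloch_diag_coeff d * (\<Sum>l<d - 1. Re (B l l)))"

definition bloch_vec :: "nat \<Rightarrow> (nat \<Rightarrow> nat \<Rightarrow> complex) \<Rightarrow> nat \<Rightarrow> real" where
  "bloch_vec d B k = bloch_coord d B (k div d) (k mod d)"

text \<open>The diagonal of \<open>bloch_mat\<close> inverts that of \<open>bloch_coord\<close>: since
  \<open>1 + (d - 1) * bloch_diag_coeff d = sqrt d\<close>, the map \<open>y \<mapsto> y - bloch_diag_coeff d / sqrt d * \<Sum>y\<close>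
  undoes \<open>x \<mapsto> x + bloch_diag_coeff d * \<Sum>x\<close>.\<close>
definition bloch_mat :: "nat \<Rightarrow> (nat \<Rightarrow> real) \<Rightarrow> nat \<Rightarrow> nat \<Rightarrow> complex" where
  "bloch_mat d p i j =
    (let q = (\<lambda>i j. p (i * d + j));
         t = bloch_diag_coeff d * (\<Sum>l<d - 1. q l l) / sqrt (real d)
     in if i < j then Complex (q i j / sqrt 2) (q j i / sqrt 2)
        else if j < i then Complex (q j i / sqrt 2) (- (q i j / sqrt 2))
        else if i < d - 1 then complex_of_real (q i i - t)
        else complex_of_real (- (\<Sum>l<d - 1. q l l - t)))"

lemma bloch_coord_offdiag:
  assumes "hermitian_mat d B" "hermitian_mat d C" "i < j" "j < d"
  shows "bloch_coord d B i j * bloch_coord d C i j + bloch_coord d B j i * bloch_coord d C j i =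
    Re (B i j * C j i) + Re (B j i * C i j)"
proof -
  have conj: "B j i = cnj (B i j)" "C j i = cnj (C i j)"
    using assms hermitian_matD[of d B j i] hermitian_matD[of d C j i] by simp_all
  show ?thesis
    unfolding bloch_coord_def conj using assms(3) by (simp add: algebra_simps)
qed

lemma bloch_coord_diag:
  assumes d: "d \<ge> 2" and "hermitian_mat d B" "hermitian_mat d C"
    and "mat_trace d B = 0" "mat_trace d C = 0"
  shows "(\<Sum>i<d - 1. bloch_coord d B i i * bloch_coord d C i i) = (\<Sum>i<d. Re (B i i * C i i))"
proof -
  have "(\<Sum>i<d. Re (B i i)) = 0" "(\<Sum>i<d. Re (C i i)) = 0"
    using assms(4,5) unfolding mat_trace_def by (simp_all flip: Re_sum)
  then have "(\<Sum>i<d - 1. bloch_coord d B i i * bloch_coord d C i i) = (\<Sum>i<d. Re (B i i) * Re (C i i))"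
    using sum_bloch_diag[OF d] unfolding bloch_coord_def by simp
  also have "\<dots> = (\<Sum>i<d. Re (B i i * C i i))"
    using hermitian_mat_diag_real[OF assms(2)] hermitian_mat_diag_real[OF assms(3)] by simp
  finally show ?thesis .
qed

lemma inner_bloch_vec:
  assumes d: "d \<ge> 2" and hB: "hermitian_mat d B" and hC: "hermitian_mat d C"
    and tB: "mat_trace d B = 0" and tC: "mat_trace d C = 0"
  shows "inner_d d (bloch_vec d B) (bloch_vec d C) = Re (mat_tr_prod d B C)"
proof -
  define \<phi> where "\<phi> i j = bloch_coord d B i j * bloch_coord d C i j" for i j
  define \<psi> where "\<psi> i j = Re (B i j * C j i)" for i j
  have "inner_d d (bloch_vec d B) (bloch_vec d C) = (\<Sum>i<d. \<Sum>j<d. \<phi> i j) - \<phi> (d - 1) (d - 1)"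
    unfolding inner_d_def bloch_vec_def \<phi>_def using d by (intro sum_bloch_index) simp
  also have "\<dots> = (\<Sum>i<d. \<Sum>j<d. if i < j then \<phi> i j + \<phi> j i else 0) + (\<Sum>i<d - 1. \<phi> i i)"
    using sum_sum_split_diag[of \<phi> d] d by (cases d) simp_all
  also have "\<dots> = (\<Sum>i<d. \<Sum>j<d. if i < j then \<psi> i j + \<psi> j i else 0) + (\<Sum>i<d. \<psi> i i)"
    unfolding \<phi>_def \<psi>_def bloch_coord_diag[OF assms]
    using bloch_coord_offdiag[OF hB hC] by (intro arg_cong2[where f="(+)"] sum.cong refl) auto
  also have "\<dots> = (\<Sum>i<d. \<Sum>j<d. \<psi> i j)"
    by (rule sum_sum_split_diag[symmetric])
  also have "\<dots> = Re (mat_tr_prod d B C)"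
    unfolding mat_tr_prod_def \<psi>_def by simp
  finally show ?thesis .
qed

lemma hermitian_bloch_mat: "hermitian_mat d (bloch_mat d p)"
  unfolding hermitian_mat_def
proof (intro allI impI)
  fix i j assume "i < d" "j < d"
  show "bloch_mat d p i j = cnj (bloch_mat d p j i)"
    by (cases "i < j"; cases "j < i") (auto simp: bloch_mat_def Let_def complex_eq_iff)
qed

lemma mat_trace_bloch_mat:
  assumes "d > 0"
  shows "mat_trace d (bloch_mat d p) = 0"
proof -
  obtain m where dm: "d = Suc m"
    using assms by (cases d) auto
  define r where "r l = p (l * d + l) - bloch_diag_coeff d * (\<Sum>i<d - 1. p (i * d + i)) / sqrt (real d)"
    for l
  have "mat_trace d (bloch_mat d p) = (\<Sum>i<m. bloch_mat d p i i) + bloch_mat d p m m"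
    unfolding mat_trace_def dm by simp
  also have "\<dots> = (\<Sum>i<m. complex_of_real (r i)) + complex_of_real (- (\<Sum>l<m. r l))"
    unfolding bloch_mat_def Let_def r_def dm by simp
  also have "\<dots> = 0"
    by (simp flip: of_real_sum)
  finally show ?thesis .
qed

lemma bloch_vec_bloch_mat:
  assumes d: "d \<ge> 2" and k: "k < d^2 - 1"
  shows "bloch_vec d (bloch_mat d p) k = p k"
proof -
  define i where "i = k div d"
  define j where "j = k mod d"
  have kij: "k = i * d + j"
    unfolding i_def j_def by simp
  have ij: "i < d" "j < d"
    unfolding i_def j_def using k d by (auto simp: less_mult_imp_div_less power2_eq_square)
  have not_last: "\<not> (i = d - 1 \<and> j = d - 1)"
  proof
    assume "i = d - 1 \<and> j = d - 1"
    then have "k = d^2 - 1"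
      using kij d by (simp add: power2_eq_square algebra_simps)
    then show False
      using k by simp
  qed
  define q where "q i j = p (i * d + j)" for i j
  define S where "S = (\<Sum>l<d - 1. q l l)"
  define t where "t = bloch_diag_coeff d * S / sqrt (real d)"
  have diag: "Re (bloch_mat d p l l) = q l l - t" if "l < d - 1" for l
    using that unfolding bloch_mat_def q_def Let_def t_def S_def by simp
  have shift: "bloch_diag_coeff d * (\<Sum>l<d - 1. Re (bloch_mat d p l l)) = t"
  proof -
    have sum_diag: "(\<Sum>l<d - 1. Re (bloch_mat d p l l)) = S - real (d - 1) * t"
      unfolding S_def using diag by (simp add: sum_subtractf)
    have "bloch_diag_coeff d * (\<Sum>l<d - 1. Re (bloch_mat d p l l)) =
        bloch_diag_coeff d * S - (real (d - 1) * bloch_diag_coeff d) * t"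
      unfolding sum_diag by (simp add: algebra_simps)
    also have "real (d - 1) * bloch_diag_coeff d = sqrt (real d) - 1"
      using bloch_diag_coeff_mult[OF d] d by (simp add: of_nat_diff)
    also have "bloch_diag_coeff d * S - (sqrt (real d) - 1) * t = t"
      unfolding t_def using d by (simp add: field_simps)
    finally show ?thesis .
  qed
  have "bloch_coord d (bloch_mat d p) i j = q i j"
  proof (cases "i = j")
    case True
    then have "i < d - 1"
      using not_last ij by auto
    then show ?thesis
      using True diag shift unfolding bloch_coord_def by simp
  next
    case False
    then show ?thesis
      by (cases "i < j") (simp_all add: bloch_coord_def bloch_mat_def q_def Let_def)
  qed
  then show ?thesis
    unfolding bloch_vec_def q_def i_def j_def by simp
qed

lemma bloch_vec_scale:
  "bloch_vec d (\<lambda>i j. complex_of_real s * B i j) k = s * bloch_vec d B k"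
  unfolding bloch_vec_def bloch_coord_def by (simp add: sum_distrib_left algebra_simps)

section \<open>States of purity \<open>1 / (d - 1)\<close>\<close>

definition centered :: "nat \<Rightarrow> (nat \<Rightarrow> nat \<Rightarrow> complex) \<Rightarrow> nat \<Rightarrow> nat \<Rightarrow> complex" where
  "centered d \<rho> i j = \<rho> i j - (if i = j then 1 / of_nat d else 0)"

lemma hermitian_centered:
  assumes "hermitian_mat d \<rho>"
  shows "hermitian_mat d (centered d \<rho>)"
  unfolding hermitian_mat_def
proof (intro allI impI)
  fix i j assume "i < d" "j < d"
  then have "\<rho> i j = cnj (\<rho> j i)"
    by (rule hermitian_matD[OF assms])
  then show "centered d \<rho> i j = cnj (centered d \<rho> j i)"
    unfolding centered_def by simp
qed

lemma mat_trace_centered: "d > 0 \<Longrightarrow> mat_trace d (centered d \<rho>) = mat_trace d \<rho> - 1"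
  unfolding mat_trace_def centered_def by (simp add: sum_subtractf)

lemma mat_tr_prod_centered:
  assumes "d > 0"
  shows "mat_tr_prod d (centered d \<rho>) (centered d \<sigma>) =
    mat_tr_prod d \<rho> \<sigma> - (mat_trace d \<rho> + mat_trace d \<sigma> - 1) / of_nat d"
proof -
  have "mat_tr_prod d (centered d \<rho>) (centered d \<sigma>) = (\<Sum>i<d. \<Sum>j<d. \<rho> i j * \<sigma> j i -
      (if i = j then (\<rho> i i + \<sigma> i i) / of_nat d - 1 / (of_nat d)^2 else 0))"
    unfolding mat_tr_prod_def centered_def
    by (intro sum.cong refl) (auto simp: algebra_simps power2_eq_square diff_divide_distrib add_divide_distrib)
  also have "\<dots> = mat_tr_prod d \<rho> \<sigma> - (mat_trace d \<rho> + mat_trace d \<sigma> - 1) / of_nat d"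
    unfolding mat_tr_prod_def mat_trace_def using assms
    by (simp add: sum_subtractf sum.delta sum.distrib sum_divide_distrib[symmetric] power2_eq_square
        diff_divide_distrib)
  finally show ?thesis .
qed

lemma mat_tr_prod_self_hermitian:
  assumes "hermitian_mat d A"
  shows "mat_tr_prod d A A = complex_of_real (\<Sum>i<d. \<Sum>j<d. (cmod (A i j))^2)"
proof -
  have "A i j * A j i = complex_of_real ((cmod (A i j))^2)" if "i < d" "j < d" for i j
    using hermitian_matD[OF assms that(2,1)] by (simp only: complex_norm_square)
  then show ?thesis
    unfolding mat_tr_prod_def by simp
qed

lemma norm_sum_sum_mult_le:
  fixes X Y :: "nat \<Rightarrow> nat \<Rightarrow> complex"
  shows "cmod (\<Sum>i<d. \<Sum>j<d. X i j * Y i j) \<le>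
    sqrt (\<Sum>i<d. \<Sum>j<d. (cmod (X i j))^2) * sqrt (\<Sum>i<d. \<Sum>j<d. (cmod (Y i j))^2)"
proof -
  define P where "P = {..<d} \<times> {..<d::nat}"
  define f where "f p = cmod (X (fst p) (snd p))" for p
  define g where "g p = cmod (Y (fst p) (snd p))" for p
  have "cmod (\<Sum>i<d. \<Sum>j<d. X i j * Y i j) \<le> (\<Sum>i<d. cmod (\<Sum>j<d. X i j * Y i j))"
    by (rule norm_sum)
  also have "\<dots> \<le> (\<Sum>i<d. \<Sum>j<d. cmod (X i j) * cmod (Y i j))"
    by (intro sum_mono) (metis (no_types, lifting) norm_mult norm_sum sum.cong)
  also have "\<dots> = (\<Sum>p\<in>P. \<bar>f p\<bar> * \<bar>g p\<bar>)"
    unfolding P_def f_def g_def by (simp add: sum.cartesian_product case_prod_unfold)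
  also have "\<dots> \<le> L2_set f P * L2_set g P"
    by (rule L2_set_mult_ineq)
  also have "\<dots> = sqrt (\<Sum>i<d. \<Sum>j<d. (cmod (X i j))^2) * sqrt (\<Sum>i<d. \<Sum>j<d. (cmod (Y i j))^2)"
    unfolding L2_set_def P_def f_def g_def by (simp add: sum.cartesian_product case_prod_unfold)
  finally show ?thesis .
qed

lemma sum_norm_centered_outer:
  fixes x :: "nat \<Rightarrow> complex"
  assumes d: "d > 0" and N: "N = (\<Sum>i<d. (cmod (x i))^2)"
  shows "(\<Sum>i<d. \<Sum>j<d. (cmod (x j * cnj (x i) - (if i = j then complex_of_real (N / real d) else 0)))^2) =
    N^2 * (real d - 1) / real d"
proof -
  define a where "a i = (cmod (x i))^2" for i
  have Na: "N = (\<Sum>i<d. a i)"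
    unfolding N a_def ..
  have "(cmod (x j * cnj (x i) - (if i = j then complex_of_real (N / real d) else 0)))^2 =
      a i * a j + (if i = j then (a i - N / real d)^2 - a i * a i else 0)" for i j
  proof (cases "i = j")
    case True
    have "x i * cnj (x i) = complex_of_real (a i)"
      unfolding a_def by (rule complex_norm_square[symmetric])
    then have "x j * cnj (x i) - (if i = j then complex_of_real (N / real d) else 0) =
        complex_of_real (a i - N / real d)"
      using True by simp
    then have "(cmod (x j * cnj (x i) - (if i = j then complex_of_real (N / real d) else 0)))^2 =
        (a i - N / real d)^2"
      by (simp only: norm_of_real power2_abs)
    then show ?thesis
      using True by simp
  qed (simp add: a_def norm_mult power_mult_distrib)
  then have "(\<Sum>i<d. \<Sum>j<d. (cmod (x j * cnj (x i) - (if i = j then complex_of_real (N / real d) else 0)))^2) =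
      (\<Sum>i<d. \<Sum>j<d. a i * a j) + (\<Sum>i<d. (a i - N / real d)^2 - a i * a i)"
    by (simp add: sum.distrib sum.delta)
  also have "(\<Sum>i<d. \<Sum>j<d. a i * a j) = N^2"
    unfolding Na by (simp add: power2_eq_square sum_product)
  also have "(\<Sum>i<d. (a i - N / real d)^2 - a i * a i) = (\<Sum>i<d. (N / real d)^2 - 2 * (N / real d) * a i)"
    by (intro sum.cong refl) (simp add: power2_eq_square algebra_simps)
  also have "\<dots> = real d * (N / real d)^2 - 2 * (N / real d) * N"
    unfolding Na by (simp add: sum_subtractf sum_distrib_left)
  also have "N^2 + (real d * (N / real d)^2 - 2 * (N / real d) * N) = N^2 * (real d - 1) / real d"
    using d by (simp add: field_simps power2_eq_square)
  finally show ?thesis .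
qed

lemma sum_norm_centered_le:
  assumes d: "d \<ge> 2" and h: "hermitian_mat d \<rho>" and tr: "mat_trace d \<rho> = 1"
    and pur: "Re (mat_tr_prod d \<rho> \<rho>) \<le> 1 / (real d - 1)"
  shows "(\<Sum>i<d. \<Sum>j<d. (cmod (centered d \<rho> i j))^2) \<le> 1 / (real d * (real d - 1))"
proof -
  have "(\<Sum>i<d. \<Sum>j<d. (cmod (centered d \<rho> i j))^2) = Re (mat_tr_prod d (centered d \<rho>) (centered d \<rho>))"
    unfolding mat_tr_prod_self_hermitian[OF hermitian_centered[OF h]] by simp
  also have "\<dots> = Re (mat_tr_prod d \<rho> \<rho>) - 1 / real d"
    using d tr by (simp add: mat_tr_prod_centered)
  also have "\<dots> \<le> 1 / (real d - 1) - 1 / real d"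
    using pur by simp
  also have "\<dots> = 1 / (real d * (real d - 1))"
    using d by (simp add: field_simps)
  finally show ?thesis .
qed

lemma quadratic_form_centered:
  fixes x :: "nat \<Rightarrow> complex"
  assumes "d > 0" "mat_trace d \<rho> = 1" and N: "N = (\<Sum>i<d. (cmod (x i))^2)"
  shows "(\<Sum>i<d. \<Sum>j<d. cnj (x i) * \<rho> i j * x j) =
    (\<Sum>i<d. \<Sum>j<d. centered d \<rho> i j *
      (x j * cnj (x i) - (if i = j then complex_of_real (N / real d) else 0))) +
    complex_of_real (N / real d)"
proof -
  have "cnj (x i) * \<rho> i j * x j =
      centered d \<rho> i j * (x j * cnj (x i)) + (if i = j then x i * cnj (x i) / of_nat d else 0)" for i j
    unfolding centered_def by (simp add: algebra_simps)
  then have "(\<Sum>i<d. \<Sum>j<d. cnj (x i) * \<rho> i j * x j) =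
      (\<Sum>i<d. \<Sum>j<d. centered d \<rho> i j * (x j * cnj (x i))) + (\<Sum>i<d. x i * cnj (x i)) / of_nat d"
    by (simp add: sum.distrib sum_divide_distrib sum.delta)
  also have "(\<Sum>i<d. x i * cnj (x i)) = complex_of_real N"
    unfolding N of_real_sum complex_norm_square ..
  also have "(\<Sum>i<d. \<Sum>j<d. centered d \<rho> i j * (x j * cnj (x i))) =
      (\<Sum>i<d. \<Sum>j<d. centered d \<rho> i j *
        (x j * cnj (x i) - (if i = j then complex_of_real (N / real d) else 0)))"
  proof -
    have "(\<Sum>i<d. centered d \<rho> i i) = 0"
      using mat_trace_centered[OF assms(1)] assms(2) unfolding mat_trace_def by simp
    moreover have "centered d \<rho> i j * (if i = j then c else 0) = (if i = j then centered d \<rho> i i * c else 0)"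
      for i j and c :: complex
      by simp
    ultimately show ?thesis
      by (simp add: right_diff_distrib sum_subtractf sum.delta flip: sum_distrib_right sum_divide_distrib)
  qed
  finally show ?thesis
    by simp
qed

lemma hermitian_psd_of_purity_le:
  assumes d: "d \<ge> 2" and h: "hermitian_mat d \<rho>" and tr: "mat_trace d \<rho> = 1"
    and pur: "Re (mat_tr_prod d \<rho> \<rho>) \<le> 1 / (real d - 1)"
  shows "0 \<le> Re (\<Sum>i<d. \<Sum>j<d. cnj (x i) * \<rho> i j * x j)"
proof -
  define N where "N = (\<Sum>i<d. (cmod (x i))^2)"
  define D where "D i j = x j * cnj (x i) - (if i = j then complex_of_real (N / real d) else 0)" for i j
  define q where "q = (\<Sum>i<d. \<Sum>j<d. centered d \<rho> i j * D i j)"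
  have form: "(\<Sum>i<d. \<Sum>j<d. cnj (x i) * \<rho> i j * x j) = q + complex_of_real (N / real d)"
    unfolding q_def D_def using d by (intro quadratic_form_centered[OF _ tr N_def]) simp
  have "cmod q \<le> sqrt (\<Sum>i<d. \<Sum>j<d. (cmod (centered d \<rho> i j))^2) * sqrt (N^2 * (real d - 1) / real d)"
    using norm_sum_sum_mult_le[of "centered d \<rho>" D d] sum_norm_centered_outer[OF _ N_def] d
    unfolding q_def D_def by simp
  also have "\<dots> \<le> sqrt (1 / (real d * (real d - 1))) * sqrt (N^2 * (real d - 1) / real d)"
    using sum_norm_centered_le[OF assms] d by (intro mult_right_mono real_sqrt_le_mono) auto
  also have "\<dots> = N / real d"
  proof -
    have "N \<ge> 0"
      unfolding N_def by (simp add: sum_nonneg)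
    moreover have "1 / (real d * (real d - 1)) * (N^2 * (real d - 1) / real d) = (N / real d)^2"
      using d by (simp add: field_simps power2_eq_square)
    ultimately show ?thesis
      by (simp flip: real_sqrt_mult)
  qed
  finally have "cmod q \<le> N / real d" .
  then show ?thesis
    unfolding form using abs_Re_le_cmod[of q] by simp
qed

lemma density_matrix_iff:
  "density_matrix d \<rho> \<longleftrightarrow> hermitian_mat d \<rho> \<and>
    (\<forall>x. 0 \<le> Re (\<Sum>i<d. \<Sum>j<d. cnj (x i) * \<rho> i j * x j)) \<and> mat_trace d \<rho> = 1"
  unfolding density_matrix_def hermitian_mat_def mat_trace_def ..

lemma density_matrix_purity_iff:
  assumes d: "d \<ge> 2"
  shows "density_matrix d \<rho> \<and> purity d \<rho> = 1 / (of_nat d - 1) \<longleftrightarrow>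
    hermitian_mat d \<rho> \<and> mat_trace d \<rho> = 1 \<and> Re (mat_tr_prod d \<rho> \<rho>) = 1 / (real d - 1)"
proof -
  have inv: "1 / (of_nat d - 1) = complex_of_real (1 / (real d - 1))"
    using d by (simp add: of_nat_diff)
  have purity: "purity d \<rho> = mat_tr_prod d \<rho> \<rho>"
    unfolding purity_def mat_tr_prod_def ..
  show ?thesis
  proof
    assume "density_matrix d \<rho> \<and> purity d \<rho> = 1 / (of_nat d - 1)"
    then show "hermitian_mat d \<rho> \<and> mat_trace d \<rho> = 1 \<and> Re (mat_tr_prod d \<rho> \<rho>) = 1 / (real d - 1)"
      unfolding density_matrix_iff purity inv by simp
  next
    assume state: "hermitian_mat d \<rho> \<and> mat_trace d \<rho> = 1 \<and> Re (mat_tr_prod d \<rho> \<rho>) = 1 / (real d - 1)"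
    then have "0 \<le> Re (\<Sum>i<d. \<Sum>j<d. cnj (x i) * \<rho> i j * x j)" for x
      using hermitian_psd_of_purity_le[OF d] by simp
    moreover have "mat_tr_prod d \<rho> \<rho> = complex_of_real (1 / (real d - 1))"
    proof -
      obtain r where "mat_tr_prod d \<rho> \<rho> = complex_of_real r"
        using state mat_tr_prod_self_hermitian by blast
      then show ?thesis
        using state by simp
    qed
    ultimately show "density_matrix d \<rho> \<and> purity d \<rho> = 1 / (of_nat d - 1)"
      using state unfolding density_matrix_iff purity inv by simp
  qed
qed

section \<open>The correspondence with the sphere\<close>

definition bloch_point :: "nat \<Rightarrow> (nat \<Rightarrow> nat \<Rightarrow> complex) \<Rightarrow> nat \<Rightarrow> real" where
  "bloch_point d \<rho> k = sqrt (real d * (real d - 1)) * bloch_vec d (centered d \<rho>) k"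

definition bloch_state :: "nat \<Rightarrow> (nat \<Rightarrow> real) \<Rightarrow> nat \<Rightarrow> nat \<Rightarrow> complex" where
  "bloch_state d p i j = (if i = j then 1 / of_nat d else 0) +
     complex_of_real (1 / sqrt (real d * (real d - 1))) * bloch_mat d p i j"

lemma on_sphere_iff_inner_d: "on_sphere d p \<longleftrightarrow> inner_d d p p = 1"
  unfolding on_sphere_def inner_d_def by (simp add: power2_eq_square)

lemma Re_mat_tr_prod_bloch_point:
  assumes d: "d \<ge> 2" and "hermitian_mat d \<rho>" "hermitian_mat d \<sigma>" "mat_trace d \<rho> = 1" "mat_trace d \<sigma> = 1"
  shows "Re (mat_tr_prod d \<rho> \<sigma>) =
    1 / real d + inner_d d (bloch_point d \<rho>) (bloch_point d \<sigma>) / (real d * (real d - 1))"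
proof -
  define s where "s = sqrt (real d * (real d - 1))"
  have s: "s * s = real d * (real d - 1)"
    unfolding s_def using d by simp
  have "inner_d d (bloch_point d \<rho>) (bloch_point d \<sigma>) =
      (s * s) * inner_d d (bloch_vec d (centered d \<rho>)) (bloch_vec d (centered d \<sigma>))"
    unfolding inner_d_def bloch_point_def s_def[symmetric] by (simp add: sum_distrib_left algebra_simps)
  also have "inner_d d (bloch_vec d (centered d \<rho>)) (bloch_vec d (centered d \<sigma>)) =
      Re (mat_tr_prod d (centered d \<rho>) (centered d \<sigma>))"
    using assms by (intro inner_bloch_vec) (simp_all add: hermitian_centered mat_trace_centered)
  also have "\<dots> = Re (mat_tr_prod d \<rho> \<sigma>) - 1 / real d"
    using assms by (simp add: mat_tr_prod_centered)
  finally show ?thesis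
    unfolding s using d by (simp add: field_simps)
qed

lemma on_sphere_bloch_point_iff:
  assumes d: "d \<ge> 2" and "hermitian_mat d \<rho>" "mat_trace d \<rho> = 1"
  shows "on_sphere d (bloch_point d \<rho>) \<longleftrightarrow> Re (mat_tr_prod d \<rho> \<rho>) = 1 / (real d - 1)"
proof -
  have "1 / real d + x / (real d * (real d - 1)) = 1 / (real d - 1) \<longleftrightarrow> x = 1" for x
  proof -
    have lhs: "1 / real d + x / (real d * (real d - 1)) = (real d - 1 + x) / (real d * (real d - 1))"
      and rhs: "1 / (real d - 1) = real d / (real d * (real d - 1))"
      using d by (simp_all add: field_simps)
    show ?thesis
      unfolding lhs rhs divide_cancel_right using d by auto
  qed
  then show ?thesis
    unfolding on_sphere_iff_inner_d Re_mat_tr_prod_bloch_point[OF assms(1,2,2,3,3)] by simp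
qed

lemma hermitian_bloch_state: "hermitian_mat d (bloch_state d p)"
  unfolding hermitian_mat_def
proof (intro allI impI)
  fix i j assume "i < d" "j < d"
  then have "bloch_mat d p i j = cnj (bloch_mat d p j i)"
    by (rule hermitian_matD[OF hermitian_bloch_mat])
  then show "bloch_state d p i j = cnj (bloch_state d p j i)"
    unfolding bloch_state_def by simp
qed

lemma mat_trace_bloch_state: "d > 0 \<Longrightarrow> mat_trace d (bloch_state d p) = 1"
  using mat_trace_bloch_mat[of d p]
  unfolding mat_trace_def bloch_state_def by (simp add: sum.distrib flip: sum_divide_distrib)

lemma bloch_point_bloch_state:
  assumes d: "d \<ge> 2" and k: "k < d^2 - 1"
  shows "bloch_point d (bloch_state d p) k = p k"
proof -
  define s where "s = sqrt (real d * (real d - 1))"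
  have "centered d (bloch_state d p) = (\<lambda>i j. complex_of_real (1 / s) * bloch_mat d p i j)"
    unfolding s_def by (simp add: fun_eq_iff centered_def bloch_state_def)
  then have "bloch_point d (bloch_state d p) k = s * bloch_vec d (\<lambda>i j. complex_of_real (1 / s) * bloch_mat d p i j) k"
    unfolding bloch_point_def s_def[symmetric] by simp
  also have "\<dots> = s * (1 / s * p k)"
    unfolding bloch_vec_scale bloch_vec_bloch_mat[OF d k] ..
  also have "\<dots> = p k"
    unfolding s_def using d by simp
  finally show ?thesis .
qed

section \<open>The two optimisation problems\<close>

lemma sphere_value_cong:
  assumes "E \<subseteq> V \<times> V" and "\<And>v k. v \<in> V \<Longrightarrow> k < d^2 - 1 \<Longrightarrow> f v k = g v k"
  shows "sphere_value d E w f = sphere_value d E w g"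
proof -
  have "inner_d d (f u) (f v) = inner_d d (g u) (g v)" if "(u, v) \<in> E" for u v
    using that assms unfolding inner_d_def by (intro sum.cong) auto
  then have "(\<Sum>(u, v)\<in>E. w (u, v) * (1 - inner_d d (f u) (f v) / (real d - 1)^2)) =
      (\<Sum>(u, v)\<in>E. w (u, v) * (1 - inner_d d (g u) (g v) / (real d - 1)^2))"
    by (intro sum.cong refl) auto
  then show ?thesis
    unfolding sphere_value_def by simp
qed

lemma Re_tr_H_G_eq_sphere_value:
  assumes d: "d \<ge> 2" and "finite V" "E \<subseteq> V \<times> V" "\<forall>(u, v)\<in>E. u \<noteq> v"
    and states: "\<And>v. v \<in> V \<Longrightarrow> hermitian_mat d (\<rho> v) \<and> mat_trace d (\<rho> v) = 1"
  shows "Re (tr_prod d V (H_G V E w) (prod_state V \<rho>)) = sphere_value d E w (\<lambda>v. bloch_point d (\<rho> v))"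
proof -
  define c where "c = 1 / 2 * ((real d - 1) / real d)"
  have edge: "(1 - Re (mat_tr_prod d (\<rho> u) (\<rho> v))) / 2 =
      c * (1 - inner_d d (bloch_point d (\<rho> u)) (bloch_point d (\<rho> v)) / (real d - 1)^2)"
    if "(u, v) \<in> E" for u v
  proof -
    have "u \<in> V" "v \<in> V"
      using that assms(3) by auto
    then have "Re (mat_tr_prod d (\<rho> u) (\<rho> v)) =
        1 / real d + inner_d d (bloch_point d (\<rho> u)) (bloch_point d (\<rho> v)) / (real d * (real d - 1))"
      using states by (intro Re_mat_tr_prod_bloch_point[OF d]) auto
    moreover have "(1 - (1 / real d + x / (real d * (real d - 1)))) / 2 = c * (1 - x / (real d - 1)^2)" for x
    proof -
      have "real d \<noteq> 0" "real d - 1 \<noteq> 0"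
        using d by auto
      then show ?thesis
        unfolding c_def by (simp add: divide_simps power2_eq_square) (simp add: algebra_simps)
    qed
    ultimately show ?thesis
      by simp
  qed
  have "Re (tr_prod d V (H_G V E w) (prod_state V \<rho>)) =
      (\<Sum>(u, v)\<in>E. w (u, v) * ((1 - Re (mat_tr_prod d (\<rho> u) (\<rho> v))) / 2)) / total_weight E w"
    using assms states by (intro Re_tr_H_G_prod_state) auto
  also have "(\<Sum>(u, v)\<in>E. w (u, v) * ((1 - Re (mat_tr_prod d (\<rho> u) (\<rho> v))) / 2)) =
      c * (\<Sum>(u, v)\<in>E. w (u, v) * (1 - inner_d d (bloch_point d (\<rho> u)) (bloch_point d (\<rho> v)) / (real d - 1)^2))"
    unfolding sum_distrib_left
  proof (intro sum.cong refl, clarify)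
    fix u v assume "(u, v) \<in> E"
    then show "w (u, v) * ((1 - Re (mat_tr_prod d (\<rho> u) (\<rho> v))) / 2) =
        c * (w (u, v) * (1 - inner_d d (bloch_point d (\<rho> u)) (bloch_point d (\<rho> v)) / (real d - 1)^2))"
      unfolding edge[OF \<open>(u, v) \<in> E\<close>] by (simp only: mult_ac)
  qed
  finally show ?thesis
    unfolding sphere_value_def c_def by simp
qed

lemma bloch_points_of_states:
  assumes d: "d \<ge> 2" and "finite V" "E \<subseteq> V \<times> V" "\<forall>(u, v)\<in>E. u \<noteq> v"
    and states: "\<forall>v\<in>V. density_matrix d (\<rho> v) \<and> purity d (\<rho> v) = 1 / (of_nat d - 1)"
  shows "(\<forall>v\<in>V. on_sphere d (bloch_point d (\<rho> v))) \<and>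
    Re (tr_prod d V (H_G V E w) (prod_state V \<rho>)) = sphere_value d E w (\<lambda>v. bloch_point d (\<rho> v))"
proof -
  have herm: "hermitian_mat d (\<rho> v) \<and> mat_trace d (\<rho> v) = 1"
    and purity: "Re (mat_tr_prod d (\<rho> v) (\<rho> v)) = 1 / (real d - 1)" if "v \<in> V" for v
    using states that density_matrix_purity_iff[OF d] by blast+
  have "\<forall>v\<in>V. on_sphere d (bloch_point d (\<rho> v))"
    using herm purity on_sphere_bloch_point_iff[OF d] by blast
  moreover have "Re (tr_prod d V (H_G V E w) (prod_state V \<rho>)) = sphere_value d E w (\<lambda>v. bloch_point d (\<rho> v))"
    using assms(2-4) herm by (intro Re_tr_H_G_eq_sphere_value[OF d]) auto
  ultimately show ?thesis ..
qed

lemma states_of_sphere_points: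
  assumes d: "d \<ge> 2" and "finite V" "E \<subseteq> V \<times> V" "\<forall>(u, v)\<in>E. u \<noteq> v"
    and sphere: "\<forall>v\<in>V. on_sphere d (f v)"
  shows "(\<forall>v\<in>V. density_matrix d (bloch_state d (f v)) \<and> purity d (bloch_state d (f v)) = 1 / (of_nat d - 1)) \<and>
    Re (tr_prod d V (H_G V E w) (prod_state V (\<lambda>v. bloch_state d (f v)))) = sphere_value d E w f"
proof -
  have states: "hermitian_mat d (bloch_state d (f v)) \<and> mat_trace d (bloch_state d (f v)) = 1" for v
    using d by (simp add: hermitian_bloch_state mat_trace_bloch_state)
  have recover: "bloch_point d (bloch_state d (f v)) k = f v k" if "k < d^2 - 1" for v k
    using d that by (rule bloch_point_bloch_state)
  have "on_sphere d (bloch_point d (bloch_state d (f v)))" if "v \<in> V" for v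
    using sphere that recover unfolding on_sphere_def by simp
  then have "\<forall>v\<in>V. density_matrix d (bloch_state d (f v)) \<and> purity d (bloch_state d (f v)) = 1 / (of_nat d - 1)"
    using states on_sphere_bloch_point_iff[OF d] density_matrix_purity_iff[OF d] by blast
  moreover have "Re (tr_prod d V (H_G V E w) (prod_state V (\<lambda>v. bloch_state d (f v)))) =
      sphere_value d E w (\<lambda>v. bloch_point d (bloch_state d (f v)))"
    using assms states by (intro Re_tr_H_G_eq_sphere_value) auto
  moreover have "\<dots> = sphere_value d E w f"
    using assms(3) recover by (rule sphere_value_cong)
  ultimately show ?thesis
    by simp
qed

lemma mixed_prod_values_eq_sphere_values:
  assumes "d \<ge> 2" "finite V" "E \<subseteq> V \<times> V" "\<forall>(u, v)\<in>E. u \<noteq> v"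
  shows "{Re (tr_prod d V (H_G V E w) (prod_state V \<rho>)) | \<rho>.
      \<forall>v\<in>V. density_matrix d (\<rho> v) \<and> purity d (\<rho> v) = 1 / (of_nat d - 1)} =
    sphere_value d E w ` {f. \<forall>v\<in>V. on_sphere d (f v)}"
proof (intro equalityI subsetI)
  fix r assume "r \<in> {Re (tr_prod d V (H_G V E w) (prod_state V \<rho>)) | \<rho>.
      \<forall>v\<in>V. density_matrix d (\<rho> v) \<and> purity d (\<rho> v) = 1 / (of_nat d - 1)}"
  then obtain \<rho> where "r = Re (tr_prod d V (H_G V E w) (prod_state V \<rho>))"
    and "\<forall>v\<in>V. density_matrix d (\<rho> v) \<and> purity d (\<rho> v) = 1 / (of_nat d - 1)"
    by blast
  with bloch_points_of_states[OF assms] show "r \<in> sphere_value d E w ` {f. \<forall>v\<in>V. on_sphere d (f v)}"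
    by (intro image_eqI[where x="\<lambda>v. bloch_point d (\<rho> v)"]) auto
next
  fix r assume "r \<in> sphere_value d E w ` {f. \<forall>v\<in>V. on_sphere d (f v)}"
  then obtain f where "r = sphere_value d E w f" and "\<forall>v\<in>V. on_sphere d (f v)"
    by blast
  with states_of_sphere_points[OF assms] show "r \<in> {Re (tr_prod d V (H_G V E w) (prod_state V \<rho>)) | \<rho>.
      \<forall>v\<in>V. density_matrix d (\<rho> v) \<and> purity d (\<rho> v) = 1 / (of_nat d - 1)}"
    by (intro CollectI exI[where x="\<lambda>v. bloch_state d (f v)"]) auto
qed

lemma inner_d_ge_neg_one:
  assumes "on_sphere d p" "on_sphere d q"
  shows "-1 \<le> inner_d d p q"
proof -
  have "0 \<le> (\<Sum>i<d^2 - 1. (p i + q i)^2)"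
    by (simp add: sum_nonneg)
  also have "\<dots> = (\<Sum>i<d^2 - 1. (p i)^2) + (\<Sum>i<d^2 - 1. (q i)^2) + 2 * inner_d d p q"
    unfolding inner_d_def by (simp add: power2_sum sum.distrib sum_distrib_left mult.assoc)
  finally show ?thesis
    using assms unfolding on_sphere_def by simp
qed

lemma sphere_value_le:
  assumes d: "d \<ge> 2" and "finite E" "E \<noteq> {}" "\<forall>e\<in>E. w e > 0" "E \<subseteq> V \<times> V"
    and sphere: "\<forall>v\<in>V. on_sphere d (f v)"
  shows "sphere_value d E w f \<le> real ((d - 1)^2 + 1) / (2 * real d * (real d - 1))"
proof -
  define W where "W = total_weight E w"
  define K where "K = 1 + 1 / (real d - 1)^2"
  have W: "W > 0"
    unfolding W_def total_weight_def using assms(2-4) by (intro sum_pos) auto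
  have "(\<Sum>(u, v)\<in>E. w (u, v) * (1 - inner_d d (f u) (f v) / (real d - 1)^2)) \<le> (\<Sum>(u, v)\<in>E. w (u, v) * K)"
  proof (intro sum_mono, clarify)
    fix u v assume uv: "(u, v) \<in> E"
    then have "-1 \<le> inner_d d (f u) (f v)"
      using assms(5) sphere by (intro inner_d_ge_neg_one) auto
    then have "- inner_d d (f u) (f v) / (real d - 1)^2 \<le> 1 / (real d - 1)^2"
      by (intro divide_right_mono) auto
    then have "1 - inner_d d (f u) (f v) / (real d - 1)^2 \<le> K"
      unfolding K_def by simp
    then show "w (u, v) * (1 - inner_d d (f u) (f v) / (real d - 1)^2) \<le> w (u, v) * K"
      using uv assms(4) by (intro mult_left_mono) auto
  qed
  also have "\<dots> = W * K"
    unfolding W_def total_weight_def by (simp add: sum_distrib_right case_prod_unfold)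
  finally have "sphere_value d E w f \<le> 1 / 2 * ((real d - 1) / real d) * (1 / W) * (W * K)"
    unfolding sphere_value_def W_def[symmetric] using d W by (intro mult_left_mono) auto
  also have "\<dots> = 1 / 2 * ((real d - 1) / real d) * (1 + 1 / (real d - 1)^2)"
    unfolding K_def using W by simp
  also have "\<dots> = real ((d - 1)^2 + 1) / (2 * real d * (real d - 1))"
  proof -
    have "real d \<noteq> 0" "real d - 1 \<noteq> 0"
      using d by auto
    then show ?thesis
      using d by (simp add: of_nat_diff divide_simps power2_eq_square)
  qed
  finally show ?thesis .
qed

lemma on_sphere_first_basis_vector:
  assumes "d \<ge> 2"
  shows "on_sphere d (\<lambda>k. if k = 0 then 1 else 0)"
proof -
  have "2 * 2 \<le> d * d"
    using assms by (intro mult_mono) auto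
  then have "0 < d^2 - 1"
    by (simp add: power2_eq_square)
  moreover have "(\<Sum>i<d^2 - 1. (if i = 0 then 1 else 0 :: real)^2) = (\<Sum>i<d^2 - 1. if i = 0 then 1 else 0)"
    by (intro sum.cong) auto
  ultimately show ?thesis
    unfolding on_sphere_def by simp
qed

theorem mainTheorem12:
  fixes d :: nat and V :: "'a set" and E :: "('a \<times> 'a) set" and w :: "'a \<times> 'a \<Rightarrow> real"
  assumes "d \<ge> 2"
    and "finite V"
    and "E \<subseteq> V \<times> V"
    and "\<forall>(u, v)\<in>E. u \<noteq> v"
    and "\<forall>(u, v)\<in>E. (v, u) \<notin> E"
    and "E \<noteq> {}"
    and "\<forall>e\<in>E. w e > 0"
  shows "MixedProd d V E w = (SUP f \<in> {f. \<forall>v\<in>V. on_sphere d (f v)}. sphere_value d E w f)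
    \<and> MixedProd d V E w \<le> (real ((d - 1)^2 + 1)) / (2 * real d * (real d - 1))
    \<and> (real ((d - 1)^2 + 1)) / (2 * real d * (real d - 1)) = 1/2 - (real d - 2) / (2 * real d * (real d - 1))"
proof -
  have sup_eq: "MixedProd d V E w = (SUP f \<in> {f. \<forall>v\<in>V. on_sphere d (f v)}. sphere_value d E w f)"
    unfolding MixedProd_def mixed_prod_values_eq_sphere_values[OF assms(1-4)] by (rule refl)
  have "finite E"
    using assms(2,3) finite_subset by blast
  then have "(SUP f \<in> {f. \<forall>v\<in>V. on_sphere d (f v)}. sphere_value d E w f) \<le>
      real ((d - 1)^2 + 1) / (2 * real d * (real d - 1))"
    using on_sphere_first_basis_vector[OF assms(1)] assms
    by (intro cSUP_least sphere_value_le) auto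
  moreover have "real ((d - 1)^2 + 1) / (2 * real d * (real d - 1)) =
      1/2 - (real d - 2) / (2 * real d * (real d - 1))"
    using assms(1) by (simp add: of_nat_diff field_simps power2_eq_square)
  ultimately show ?thesis
    using sup_eq by simp
qed

end
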